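(* Let $\mathcal{X}$ be Polish and $\mathcal{H}\subseteq\{0,1\}^{\mathcal{X}}$ a measurable concept class that has an infinite Littlestone tree. Then for any learning algorithm $\hat h_n$ there exists a realizable distribution $P$ such that $\mathbf{E}[\mathrm{er}_P(\hat h_n)]\ge\frac{1}{32n}$ for infinitely many $n$. In particular, $\mathcal{H}$ is not learnable at rate faster than $\frac1n$.
   Context: $\mathcal{H}$ measurable: there is a Polish $\Theta$ and Borel $\mathsf{h}:\Theta\times\mathcal{X}\to\{0,1\}$ with $\mathcal{H}=\{\mathsf{h}(\theta,\cdot)\}$. $\mathrm{er}_P(h)=P\{(x,y):h(x)\ne y\}$; $P$ realizable if $\inf_{h\in\mathcal{H}}\mathrm{er}_P(h)=0$. A learning algorithm is a sequence of universally measurable maps $H_n:(\mathcal{X}\times\{0,1\})^n\times\mathcal{X}\to\{0,1\}$ with $\hat h_n(x)=H_n((X_1,Y_1),\ldots,(X_n,Y_n),x)$ for i.i.d. $(X_i,Y_i)\sim P$. Not learnable faster than $R$: every algorithm has a realizable $P$ and $C,c>0$ with $\mathbf{E}[\mathrm{er}_P(\hat h_n)]\ge CR(cn)$ for infinitely many $n$. Littlestone tree of depth $d\le\infty$: a collection $\{x_{\mathbf u}:0\le k<d,\ \mathbf u\in\{0,1\}^k\}\subseteq\mathcal{X}$ such that for every $\mathbf y\in\{0,1\}^d$ and $n<d$ there is $h\in\mathcal{H}$ with $h(x_{\mathbf y_{\le k}})=y_{k+1}$ for $0\le k\le n$, $\mathbf y_{\le k}=(y_1,\ldots,y_k)$.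 Infinite: $d=\infty$. *)

theory Defs
  imports "HOL-Probability.Probability"
begin

definition example_space :: "('x::topological_space \<times> bool) measure" where
  "example_space = borel \<Otimes>\<^sub>M count_space UNIV"

definition sample_test_space :: "nat \<Rightarrow> ((nat \<Rightarrow> 'x::topological_space \<times> bool) \<times> 'x) measure" where
  "sample_test_space n = (\<Pi>\<^sub>M i\<in>{..<n}. example_space) \<Otimes>\<^sub>M borel"

definition universally_measurable :: "'a measure \<Rightarrow> ('a \<Rightarrow> bool) \<Rightarrow> bool" where
  "universally_measurable M f \<longleftrightarrow>
     (\<forall>\<mu>. prob_space \<mu> \<and> sets \<mu> = sets M \<longrightarrow> f \<in> measurable (completion \<mu>) (count_space UNIV))"

text \<open>A learning algorithm: H n S x is the prediction at x after seeing the sample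
  S 0, ..., S (n-1).\<close>
definition learning_algorithm :: "(nat \<Rightarrow> (nat \<Rightarrow> 'x::topological_space \<times> bool) \<Rightarrow> 'x \<Rightarrow> bool) \<Rightarrow> bool" where
  "learning_algorithm H \<longleftrightarrow>
     (\<forall>n. universally_measurable (sample_test_space n) (\<lambda>(S, x). H n S x))"

definition distribution :: "('x::topological_space \<times> bool) measure \<Rightarrow> bool" where
  "distribution P \<longleftrightarrow> prob_space P \<and> sets P = sets example_space"

text \<open>er_P(h) = P{(x,y). h x \<noteq> y} (completed measure, since hypotheses output by
  the algorithm are only universally measurable).\<close>
definition er :: "('x \<times> bool) measure \<Rightarrow> ('x \<Rightarrow> bool) \<Rightarrow> real" where
  "er P h = measure (completion P) {p \<in> space P. h (fst p) \<noteq> snd p}"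

text \<open>Measurable concept class H = {h(theta, .)} with Theta Polish and h Borel.\<close>
definition measurable_class :: "('t::polish_space \<Rightarrow> 'x::polish_space \<Rightarrow> bool) \<Rightarrow> bool" where
  "measurable_class h \<longleftrightarrow> {p. h (fst p) (snd p)} \<in> sets (borel :: ('t \<times> 'x) measure)"

definition realizable :: "('t \<Rightarrow> 'x \<Rightarrow> bool) \<Rightarrow> ('x \<times> bool) measure \<Rightarrow> bool" where
  "realizable h P \<longleftrightarrow> (INF \<theta>. er P (h \<theta>)) = 0"

definition expected_error ::
  "(nat \<Rightarrow> (nat \<Rightarrow> 'x \<times> bool) \<Rightarrow> 'x \<Rightarrow> bool) \<Rightarrow> ('x \<times> bool) measure \<Rightarrow> nat \<Rightarrow> ennreal" where
  "expected_error H P n =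
     (\<integral>\<^sup>+ S. ennreal (er P (H n S)) \<partial>completion (\<Pi>\<^sub>M i\<in>{..<n}. P))"

text \<open>Infinite Littlestone tree: nodes indexed by finite bit strings u (lists), the node
  of depth k along branch y being x (y_1,...,y_k).\<close>
definition infinite_littlestone_tree :: "('t \<Rightarrow> 'x \<Rightarrow> bool) \<Rightarrow> (bool list \<Rightarrow> 'x) \<Rightarrow> bool" where
  "infinite_littlestone_tree h T \<longleftrightarrow>
     (\<forall>y :: nat \<Rightarrow> bool. \<forall>n. \<exists>\<theta>. \<forall>k\<le>n. h \<theta> (T (map y [0..<k])) = y k)"

definition has_infinite_littlestone_tree :: "('t \<Rightarrow> 'x \<Rightarrow> bool) \<Rightarrow> bool" where
  "has_infinite_littlestone_tree h \<longleftrightarrow> (\<exists>T. infinite_littlestone_tree h T)"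

definition not_learnable_faster ::
  "('t \<Rightarrow> 'x::topological_space \<Rightarrow> bool) \<Rightarrow> (real \<Rightarrow> real) \<Rightarrow> bool" where
  "not_learnable_faster h R \<longleftrightarrow>
     (\<forall>H. learning_algorithm H \<longrightarrow>
        (\<exists>P C c. distribution P \<and> realizable h P \<and> C > 0 \<and> c > 0 \<and>
           infinite {n. expected_error H P n \<ge> ennreal (C * R (c * real n))}))"

end

theory Submission
  imports Defs
begin

text \<open>An adversary walks down a branch \<open>y\<close> of the tree and gives the
  labelled node at depth \<open>j\<close> the mass \<open>2^-(j+1)\<close>; every such distribution is realizable,
  because the tree shatters each finite part of the branch. The label \<open>y k\<close> is chosen
  after looking at the algorithm: a sample of size \<open>n = 2^(k-2)\<close> avoids all nodes of depth
  \<open>\<ge> k\<close> with probability \<open>(1 - 1/(4n))^n \<ge> 3/4\<close> (Bernoulli), and among such samples the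
  adversary labels node \<open>k\<close> against the majority prediction of the algorithm there. The
  test point hits node \<open>k\<close> with probability \<open>2^-(k+1) = 1/(8n)\<close>, so the expected error is
  at least \<open>1/(8n) \<cdot> 3/8 > 1/(32n)\<close>. The hard distribution is discrete.\<close>

subsection \<open>Discrete distributions of labelled examples\<close>

lemma space_example_space: "space (example_space :: ('x::topological_space \<times> bool) measure) = UNIV"
  by (simp add: example_space_def space_pair_measure)

lemma singleton_sets_example_space:
  "{p} \<in> sets (example_space :: ('x::polish_space \<times> bool) measure)"
proof -
  obtain a b where "p = (a, b)" by (cases p)
  then have "{p} = {a} \<times> {b}" by auto
  moreover have "{a} \<in> sets (borel :: 'x measure)" by (simp add: borel_closed)
  ultimately show ?thesis
    unfolding example_space_def using pair_measureI[of "{a}" borel "{b}" "count_space UNIV"] by simp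
qed

lemma countable_sets_example_space:
  "countable A \<Longrightarrow> A \<in> sets (example_space :: ('x::polish_space \<times> bool) measure)"
  by (rule sets.countable) (auto simp: singleton_sets_example_space)

definition pmf_distribution :: "('x::polish_space \<times> bool) pmf \<Rightarrow> ('x \<times> bool) measure" where
  "pmf_distribution q = distr (measure_pmf q) example_space id"

lemma sets_pmf_distribution [simp]: "sets (pmf_distribution q) = sets example_space"
  by (simp add: pmf_distribution_def)

lemma space_pmf_distribution [simp]: "space (pmf_distribution q) = UNIV"
  by (simp add: pmf_distribution_def space_example_space)

lemma distribution_pmf_distribution: "distribution (pmf_distribution q)"
  unfolding distribution_def pmf_distribution_def
  by (auto intro!: measure_pmf.prob_space_distr simp: space_example_space)

lemma emeasure_pmf_distribution:
  "A \<in> sets example_space \<Longrightarrow> emeasure (pmf_distribution q) A = emeasure (measure_pmf q) A"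
  unfolding pmf_distribution_def by (subst emeasure_distr) (auto simp: space_example_space)

text \<open>Completion is harmless: outside the countable support everything is null.\<close>
lemma measure_completion_pmf_distribution:
  "measure (completion (pmf_distribution q)) A = measure_pmf.prob q A"
proof -
  let ?P = "pmf_distribution q" and ?C = "set_pmf q"
  have C: "A \<inter> ?C \<in> sets ?P" "?C \<in> sets ?P"
    by (auto intro: countable_sets_example_space)
  have "UNIV - ?C \<in> sets ?P"
    using C(2) by (metis sets.compl_sets space_pmf_distribution)
  moreover have "emeasure ?P (UNIV - ?C) = 0"
    using calculation emeasure_Int_set_pmf[of q "UNIV - ?C"]
    by (simp add: emeasure_pmf_distribution Int_commute)
  ultimately have "UNIV - ?C \<in> null_sets ?P" by auto
  then have "A - ?C \<in> null_sets (completion ?P)"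
    by (intro null_sets_completion_subset[OF _ null_sets_completionI]) auto
  moreover have "A = (A \<inter> ?C) \<union> (A - ?C)" by auto
  ultimately have "measure (completion ?P) A = measure ?P (A \<inter> ?C)"
    using C(1) by (metis measure_Un_null_set measure_completion sets_completionI_sets)
  also have "\<dots> = measure_pmf.prob q (A \<inter> ?C)"
    using C(1) by (simp add: measure_def emeasure_pmf_distribution)
  also have "\<dots> = measure_pmf.prob q A"
    by (rule measure_Int_set_pmf)
  finally show ?thesis .
qed

lemma er_pmf_distribution: "er (pmf_distribution q) f = measure_pmf.prob q {p. f (fst p) \<noteq> snd p}"
  unfolding er_def by (simp add: measure_completion_pmf_distribution)

lemma emeasure_PiM_pmf_distribution_finite:
  fixes q :: "('x::polish_space \<times> bool) pmf" and n :: nat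
  assumes "finite B" "B \<subseteq> {..<n} \<rightarrow>\<^sub>E UNIV"
  shows "B \<in> sets (\<Pi>\<^sub>M i\<in>{..<n}. pmf_distribution q)"
    and "emeasure (\<Pi>\<^sub>M i\<in>{..<n}. pmf_distribution q) B = ennreal (\<Sum>S\<in>B. \<Prod>i<n. pmf q (S i))"
proof -
  let ?M = "\<Pi>\<^sub>M i\<in>{..<n}. pmf_distribution q"
  have "sigma_finite_measure (pmf_distribution q)"
    using distribution_pmf_distribution unfolding distribution_def
    by (metis prob_space_imp_sigma_finite)
  then interpret product_sigma_finite "\<lambda>_. pmf_distribution q"
    unfolding product_sigma_finite_def by simp
  have singleton: "{S} = (\<Pi>\<^sub>E i\<in>{..<n}. {S i})" "{S} \<in> sets ?M" if "S \<in> B" for S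
  proof -
    show eq: "{S} = (\<Pi>\<^sub>E i\<in>{..<n}. {S i})"
      using that assms(2) by (intro PiE_singleton[symmetric]) (auto simp: PiE_iff)
    show "{S} \<in> sets ?M"
      unfolding eq by (rule sets_PiM_I_finite) (simp_all add: singleton_sets_example_space)
  qed
  show "B \<in> sets ?M"
    by (rule sets.countable) (use singleton assms(1) in \<open>auto intro: countable_finite\<close>)
  have "emeasure ?M B = (\<Sum>S\<in>B. emeasure ?M {S})"
    using singleton assms by (intro emeasure_eq_sum_singleton) auto
  also have "\<dots> = (\<Sum>S\<in>B. \<Prod>i<n. ennreal (pmf q (S i)))"
    using singleton
    by (intro sum.cong) (simp_all add: emeasure_PiM singleton_sets_example_space
        emeasure_pmf_distribution emeasure_pmf_single)
  also have "\<dots> = ennreal (\<Sum>S\<in>B. \<Prod>i<n. pmf q (S i))"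
    by (simp add: prod_ennreal prod_nonneg sum_nonneg)
  finally show "emeasure ?M B = ennreal (\<Sum>S\<in>B. \<Prod>i<n. pmf q (S i))" .
qed

lemma expected_error_pmf_distribution_ge:
  fixes q :: "('x::polish_space \<times> bool) pmf"
  assumes "finite B" "B \<subseteq> {..<n} \<rightarrow>\<^sub>E UNIV" and errs: "\<And>S. S \<in> B \<Longrightarrow> H n S x \<noteq> b"
  shows "ennreal (pmf q (x, b) * (\<Sum>S\<in>B. \<Prod>i<n. pmf q (S i))) \<le> expected_error H (pmf_distribution q) n"
proof -
  let ?M = "\<Pi>\<^sub>M i\<in>{..<n}. pmf_distribution q"
  note B = emeasure_PiM_pmf_distribution_finite[OF assms(1,2)]
  have pointwise: "ennreal (pmf q (x, b)) * indicator B S \<le> ennreal (er (pmf_distribution q) (H n S))" for S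
  proof (cases "S \<in> B")
    case True
    have "pmf q (x, b) = measure_pmf.prob q {(x, b)}" by (simp add: measure_pmf_single)
    also have "\<dots> \<le> er (pmf_distribution q) (H n S)"
      unfolding er_pmf_distribution
      by (rule measure_pmf.finite_measure_mono) (use errs[OF True] in auto)
    finally show ?thesis using True by (simp add: ennreal_leI)
  qed simp
  have "ennreal (pmf q (x, b) * (\<Sum>S\<in>B. \<Prod>i<n. pmf q (S i))) = ennreal (pmf q (x, b)) * emeasure ?M B"
    using B(2) by (simp add: ennreal_mult sum_nonneg prod_nonneg)
  also have "\<dots> = (\<integral>\<^sup>+ S. ennreal (pmf q (x, b)) * indicator B S \<partial>completion ?M)"
    using B(1) by (simp add: nn_integral_cmult_indicator)
  also have "\<dots> \<le> expected_error H (pmf_distribution q) n"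
    unfolding expected_error_def by (intro nn_integral_mono pointwise)
  finally show ?thesis .
qed

subsection \<open>The distribution along a branch of the tree\<close>

abbreviation half_geometric :: "nat pmf" where
  "half_geometric \<equiv> geometric_pmf (1/2)"

lemma pmf_half_geometric: "pmf half_geometric j = (1/2) ^ Suc j"
  by simp

lemma sum_pmf_half_geometric: "(\<Sum>j<k. pmf half_geometric j) = 1 - (1/2) ^ k"
  by (induction k) (auto simp: field_simps)

definition branch_node :: "(bool list \<Rightarrow> 'x) \<Rightarrow> (nat \<Rightarrow> bool) \<Rightarrow> nat \<Rightarrow> 'x \<times> bool" where
  "branch_node T y j = (T (map y [0..<j]), y j)"

definition branch_pmf :: "(bool list \<Rightarrow> 'x) \<Rightarrow> (nat \<Rightarrow> bool) \<Rightarrow> ('x \<times> bool) pmf" where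
  "branch_pmf T y = map_pmf (branch_node T y) half_geometric"

lemma pmf_branch_pmf_ge: "pmf half_geometric j \<le> pmf (branch_pmf T y) (branch_node T y j)"
  unfolding branch_pmf_def pmf_map
  by (subst measure_pmf_single[symmetric]) (auto intro: measure_pmf.finite_measure_mono)

lemma realizable_branch_pmf:
  assumes "infinite_littlestone_tree h T"
  shows "realizable h (pmf_distribution (branch_pmf T y))"
proof -
  let ?er = "\<lambda>\<theta>. er (pmf_distribution (branch_pmf T y)) (h \<theta>)"
  have er_nonneg: "0 \<le> ?er \<theta>" for \<theta> by (simp add: er_def)
  have er_small: "\<exists>\<theta>. ?er \<theta> \<le> (1/2) ^ d" for d
  proof -
    obtain \<theta> where \<theta>: "\<forall>k\<le>d. h \<theta> (T (map y [0..<k])) = y k"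
      using assms unfolding infinite_littlestone_tree_def by blast
    have "?er \<theta> = measure_pmf.prob half_geometric (branch_node T y -` {p. h \<theta> (fst p) \<noteq> snd p})"
      by (simp add: er_pmf_distribution branch_pmf_def)
    also have "\<dots> \<le> measure_pmf.prob half_geometric (UNIV - {..<d})"
      by (rule measure_pmf.finite_measure_mono) (use \<theta> in \<open>auto simp: branch_node_def\<close>)
    also have "\<dots> = (1/2) ^ d"
      using measure_pmf.prob_compl[of "{..<d}" half_geometric]
      by (simp add: measure_measure_pmf_finite sum_pmf_half_geometric del: pmf_geometric)
    finally show ?thesis by blast
  qed
  have bdd: "bdd_below (range ?er)"
    by (rule bdd_belowI2[of _ 0]) (rule er_nonneg)
  have "(INF \<theta>. ?er \<theta>) \<le> 0 + e" if "e > 0" for e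
  proof -
    obtain d where "(1/2::real) ^ d < e" using real_arch_pow_inv[OF \<open>e > 0\<close>, of "1/2"] by auto
    moreover obtain \<theta> where "?er \<theta> \<le> (1/2) ^ d" using er_small by blast
    moreover have "(INF \<theta>. ?er \<theta>) \<le> ?er \<theta>" by (rule cINF_lower[OF bdd]) simp
    ultimately show ?thesis by linarith
  qed
  then have "(INF \<theta>. ?er \<theta>) \<le> 0" by (rule field_le_epsilon)
  moreover have "0 \<le> (INF \<theta>. ?er \<theta>)" by (rule cINF_greatest) (simp_all add: er_nonneg)
  ultimately show ?thesis unfolding realizable_def by linarith
qed

subsection \<open>The adversary\<close>

definition prefix_node :: "(bool list \<Rightarrow> 'x) \<Rightarrow> bool list \<Rightarrow> nat \<Rightarrow> 'x \<times> bool" where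
  "prefix_node T u j = (T (take j u), u ! j)"

definition prefix_nodes :: "(bool list \<Rightarrow> 'x) \<Rightarrow> bool list \<Rightarrow> ('x \<times> bool) set" where
  "prefix_nodes T u = prefix_node T u ` {..<length u}"

text \<open>The branch distribution restricted to the nodes of depth \<open>< length u\<close>, where \<open>u\<close> is the
  part of the branch chosen so far.\<close>
definition prefix_weight :: "(bool list \<Rightarrow> 'x) \<Rightarrow> bool list \<Rightarrow> 'x \<times> bool \<Rightarrow> real" where
  "prefix_weight T u p = (\<Sum>j\<in>{j\<in>{..<length u}. prefix_node T u j = p}. pmf half_geometric j)"

lemma prefix_weight_nonneg: "0 \<le> prefix_weight T u p"
  by (simp add: prefix_weight_def sum_nonneg)

lemma sum_prefix_weight: "(\<Sum>p\<in>prefix_nodes T u. prefix_weight T u p) = 1 - (1/2) ^ length u"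
  unfolding prefix_nodes_def prefix_weight_def
  using sum.image_gen[of "{..<length u}" "pmf half_geometric" "prefix_node T u"]
  by (simp add: sum_pmf_half_geometric del: pmf_geometric)

lemma prefix_weight_le_pmf_branch_pmf:
  "prefix_weight T (map y [0..<k]) p \<le> pmf (branch_pmf T y) p"
proof -
  have "prefix_weight T (map y [0..<k]) p =
      measure_pmf.prob half_geometric {j\<in>{..<k}. prefix_node T (map y [0..<k]) j = p}"
    by (simp add: prefix_weight_def measure_measure_pmf_finite del: pmf_geometric)
  also have "\<dots> \<le> measure_pmf.prob half_geometric (branch_node T y -` {p})"
    by (rule measure_pmf.finite_measure_mono)
      (auto simp: prefix_node_def branch_node_def take_map min_def)
  finally show ?thesis by (simp add: branch_pmf_def pmf_map)
qed

definition mistake_weight ::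
  "(nat \<Rightarrow> (nat \<Rightarrow> 'x \<times> bool) \<Rightarrow> 'x \<Rightarrow> bool) \<Rightarrow> (bool list \<Rightarrow> 'x) \<Rightarrow> nat \<Rightarrow> bool list \<Rightarrow> bool \<Rightarrow> real" where
  "mistake_weight H T n u b =
     (\<Sum>S | S \<in> {..<n} \<rightarrow>\<^sub>E prefix_nodes T u \<and> H n S (T u) \<noteq> b. \<Prod>i<n. prefix_weight T u (S i))"

lemma mistake_weight_True_plus_False:
  "mistake_weight H T n u True + mistake_weight H T n u False = (1 - (1/2) ^ length u) ^ n"
proof -
  let ?D = "{..<n} \<rightarrow>\<^sub>E prefix_nodes T u" and ?w = "\<lambda>S. \<Prod>i<n. prefix_weight T u (S i)"
  have fin: "finite ?D" by (simp add: prefix_nodes_def finite_PiE)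
  have "mistake_weight H T n u True + mistake_weight H T n u False = sum ?w ?D"
    unfolding mistake_weight_def
    by (subst sum.union_disjoint[symmetric]) (use fin in \<open>auto intro: sum.cong\<close>)
  also have "\<dots> = (\<Prod>i<n. \<Sum>p\<in>prefix_nodes T u. prefix_weight T u p)"
    by (rule prod_sum_PiE[symmetric]) (simp_all add: prefix_nodes_def)
  finally show ?thesis by (simp add: sum_prefix_weight)
qed

definition adversary_label :: "(nat \<Rightarrow> (nat \<Rightarrow> 'x \<times> bool) \<Rightarrow> 'x \<Rightarrow> bool) \<Rightarrow> (bool list \<Rightarrow> 'x) \<Rightarrow> nat \<Rightarrow> bool list \<Rightarrow> bool" where
  "adversary_label H T n u \<longleftrightarrow> mistake_weight H T n u False \<le> mistake_weight H T n u True"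

lemma mistake_weight_adversary_label:
  "(1 - (1/2) ^ length u) ^ n / 2 \<le> mistake_weight H T n u (adversary_label H T n u)"
  using mistake_weight_True_plus_False[of H T n u] unfolding adversary_label_def
  by (cases "mistake_weight H T n u False \<le> mistake_weight H T n u True") auto

primrec adversary_prefix :: "(nat \<Rightarrow> (nat \<Rightarrow> 'x \<times> bool) \<Rightarrow> 'x \<Rightarrow> bool) \<Rightarrow> (bool list \<Rightarrow> 'x) \<Rightarrow> nat \<Rightarrow> bool list" where
  "adversary_prefix H T 0 = []"
| "adversary_prefix H T (Suc k) =
     adversary_prefix H T k @ [adversary_label H T (2 ^ (k - 2)) (adversary_prefix H T k)]"

definition adversary_branch :: "(nat \<Rightarrow> (nat \<Rightarrow> 'x \<times> bool) \<Rightarrow> 'x \<Rightarrow> bool) \<Rightarrow> (bool list \<Rightarrow> 'x) \<Rightarrow> nat \<Rightarrow> bool" where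
  "adversary_branch H T k = adversary_label H T (2 ^ (k - 2)) (adversary_prefix H T k)"

lemma adversary_prefix_eq_map: "adversary_prefix H T k = map (adversary_branch H T) [0..<k]"
  by (induction k) (simp_all add: adversary_branch_def)

lemma power_one_minus_inverse_4n_ge: "3/4 \<le> (1 - 1 / (4 * real n)) ^ n"
proof (cases "n = 0")
  case False
  then have "1 + real n * (- (1 / (4 * real n))) \<le> (1 + (- (1 / (4 * real n)))) ^ n"
    by (intro Bernoulli_inequality) (simp add: field_simps)
  with False show ?thesis by simp
qed simp

lemma expected_error_adversary_branch_ge:
  fixes H :: "nat \<Rightarrow> (nat \<Rightarrow> 'x::polish_space \<times> bool) \<Rightarrow> 'x \<Rightarrow> bool"
    and T :: "bool list \<Rightarrow> 'x"
  defines "q \<equiv> branch_pmf T (adversary_branch H T)"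
  shows "ennreal (1 / (32 * real (2 ^ m))) \<le> expected_error H (pmf_distribution q) (2 ^ m)"
proof -
  define k where "k = m + 2"
  define n :: nat where "n = 2 ^ m"
  let ?y = "adversary_branch H T"
  let ?u = "adversary_prefix H T k"
  define B where "B = {S \<in> {..<n} \<rightarrow>\<^sub>E prefix_nodes T ?u. H n S (T ?u) \<noteq> ?y k}"
  have half_k: "(1/2::real) ^ k = 1 / (4 * real n)"
    by (simp add: k_def n_def power_add power_divide)
  have "length ?u = k" by (simp add: adversary_prefix_eq_map)
  then have "3/8 \<le> (1 - (1/2::real) ^ length ?u) ^ n / 2"
    using power_one_minus_inverse_4n_ge[of n] by (simp only: half_k)
  also have "\<dots> \<le> mistake_weight H T n ?u (?y k)"
    using mistake_weight_adversary_label[of ?u n H T]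
    by (simp only: adversary_branch_def n_def k_def add_diff_cancel_right')
  also have "\<dots> \<le> (\<Sum>S\<in>B. \<Prod>i<n. pmf q (S i))"
    unfolding mistake_weight_def B_def q_def adversary_prefix_eq_map
    by (intro sum_mono prod_mono conjI prefix_weight_nonneg prefix_weight_le_pmf_branch_pmf)
  finally have sample_weight: "3/8 \<le> (\<Sum>S\<in>B. \<Prod>i<n. pmf q (S i))" .
  have node_weight: "1 / (8 * real n) \<le> pmf q (T ?u, ?y k)"
  proof -
    have "pmf half_geometric k = 1 / (8 * real n)"
      unfolding pmf_half_geometric power_Suc half_k by simp
    then show ?thesis
      using pmf_branch_pmf_ge[of k T ?y]
      by (simp add: q_def branch_node_def adversary_prefix_eq_map del: pmf_geometric)
  qed
  have "1 / (32 * real n) \<le> 1 / (8 * real n) * (3/8)"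
    by (simp add: n_def divide_simps)
  also have "\<dots> \<le> pmf q (T ?u, ?y k) * (\<Sum>S\<in>B. \<Prod>i<n. pmf q (S i))"
    by (rule mult_mono[OF node_weight sample_weight]) simp_all
  finally have "ennreal (1 / (32 * real n)) \<le> ennreal (pmf q (T ?u, ?y k) * (\<Sum>S\<in>B. \<Prod>i<n. pmf q (S i)))"
    by (rule ennreal_leI)
  also have "\<dots> \<le> expected_error H (pmf_distribution q) n"
  proof (rule expected_error_pmf_distribution_ge)
    show "finite B" by (simp add: B_def prefix_nodes_def finite_PiE)
  qed (auto simp: B_def)
  finally show ?thesis by (simp add: n_def)
qed

lemma littlestone_tree_hard_distribution:
  fixes H :: "nat \<Rightarrow> (nat \<Rightarrow> 'x::polish_space \<times> bool) \<Rightarrow> 'x \<Rightarrow> bool"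
  assumes "infinite_littlestone_tree h T"
  shows "\<exists>P. distribution P \<and> realizable h P \<and>
           infinite {n. n \<ge> 1 \<and> expected_error H P n \<ge> ennreal (1 / (32 * real n))}"
proof (intro exI conjI)
  let ?P = "pmf_distribution (branch_pmf T (adversary_branch H T))"
  show "distribution ?P" by (rule distribution_pmf_distribution)
  show "realizable h ?P" using assms by (rule realizable_branch_pmf)
  have "range (\<lambda>m. (2::nat) ^ m) \<subseteq> {n. n \<ge> 1 \<and> expected_error H ?P n \<ge> ennreal (1 / (32 * real n))}"
    using expected_error_adversary_branch_ge by auto
  then show "infinite {n. n \<ge> 1 \<and> expected_error H ?P n \<ge> ennreal (1 / (32 * real n))}"
    by (rule infinite_super) (simp add: range_inj_infinite inj_def)
qed

theorem mainTheorem8: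
  fixes h :: "'t::polish_space \<Rightarrow> 'x::polish_space \<Rightarrow> bool"
  assumes "measurable_class h"
    and "has_infinite_littlestone_tree h"
  shows "(\<forall>H. learning_algorithm H \<longrightarrow>
            (\<exists>P. distribution P \<and> realizable h P \<and>
               infinite {n. n \<ge> 1 \<and> expected_error H P n \<ge> ennreal (1 / (32 * real n))}))
         \<and> not_learnable_faster h (\<lambda>t. 1 / t)"
proof -
  obtain T where T: "infinite_littlestone_tree h T"
    using assms(2) unfolding has_infinite_littlestone_tree_def by blast
  note hard = littlestone_tree_hard_distribution[OF T]
  moreover have "not_learnable_faster h (\<lambda>t. 1 / t)"
    unfolding not_learnable_faster_def
  proof (intro allI impI)
    fix H :: "nat \<Rightarrow> (nat \<Rightarrow> 'x \<times> bool) \<Rightarrow> 'x \<Rightarrow> bool"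
    obtain P where P: "distribution P" "realizable h P"
      "infinite {n. n \<ge> 1 \<and> expected_error H P n \<ge> ennreal (1 / (32 * real n))}"
      using hard by blast
    have "infinite {n. expected_error H P n \<ge> ennreal (1/32 * (1 / (1 * real n)))}"
      by (rule infinite_super[OF _ P(3)]) auto
    with P show "\<exists>P C c. distribution P \<and> realizable h P \<and> C > 0 \<and> c > 0 \<and>
        infinite {n. expected_error H P n \<ge> ennreal (C * (1 / (c * real n)))}"
      by (intro exI[of _ P] exI[of _ "1/32::real"] exI[of _ "1::real"]) auto
  qed
  ultimately show ?thesis by blast
qed

end
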